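(* Let $P,\sigma_1^2,\sigma_2^2,\sigma_e^2>0$, let $h_1,h_2$ satisfy $0<|h_1|^2\le|h_2|^2$, set $\rho_1=P/\sigma_1^2$, $\rho_2=P/\sigma_2^2$, $\rho_e=P/\sigma_e^2$, and let $Q_1>0$ and $0<\varepsilon<1$. For $\phi_1,\phi_2\in(0,1]$ and $R_E\ge0$ define $$C_1=\log_2\Big(1+\frac{\phi_1\rho_1|h_1|^2}{\phi_2\rho_1|h_1|^2+1}\Big),\qquad R_2^s(\phi_2,R_E)=\big[\log_2(1+\phi_2\rho_2|h_2|^2)-R_E\big]^+,$$ with $[x]^+=\max(x,0)$, and the high-MER asymptotic secrecy outage probability $$P_{out}^{\infty}(R_E,\phi_2)=\begin{cases}\exp\!\Big(-\frac{2^{R_E}-1}{\rho_e(\phi_2-\phi_1(2^{R_E}-1))}\Big), & 2^{R_E}-1<\frac{\phi_2}{\phi_1},\\ 0, & 2^{R_E}-1\ge\frac{\phi_2}{\phi_1}.\end{cases}$$ Consider the problem $\max_{R_E,\phi_1,\phi_2}R_2^s(\phi_2,R_E)$ subject to $C_1\ge Q_1$, $P_{out}^{\infty}(R_E,\phi_2)\le\varepsilon$ and $\phi_1+\phi_2=1$ (the problem \textbf{P1} in the regime $\rho_1/\rho_e\to\infty$). Then the feasibility condition of this problem is $$P>\max\Big(\frac{2^{Q_1}-1}{|h_1|^2}\sigma_1^2,\ \frac{\sigma_2^2}{|h_2|^2}-\frac{\sigma_e^2}{\ln(1/\varepsilon)}\Big),$$ and under this condition the optimal power allocation and redundancy rate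 are $$\phi_2^*=\min\Big(\frac{1}{2^{Q_1}}+\frac{\sigma_1^2}{P|h_1|^22^{Q_1}}-\frac{\sigma_1^2}{P|h_1|^2},\ \frac12+\frac{\sigma_e^2}{2P\ln(1/\varepsilon)}-\frac{\sigma_2^2}{2P|h_2|^2}\Big),$$ $$\phi_1^*=1-\phi_2^*,\qquad R_E^*=\log_2\Big(1+\frac{\phi_2^*P\ln(1/\varepsilon)}{\sigma_e^2+\phi_1^*P\ln(1/\varepsilon)}\Big).$$
   Context: Two-user downlink NOMA with a passive eavesdropper: $\phi_k$ is the fraction of transmit power to user $k$, $C_1$ is the rate of the weak user 1 (required to be at least $Q_1$), $R_2^s$ is the secrecy rate of the strong user 2 with redundancy rate $R_E$, and $P^{\infty}_{out}$ is the limit of user 2's secrecy outage probability as the main-to-eavesdropper ratio $\rho_1/\rho_e=\sigma_e^2/\sigma_1^2\to\infty$; $\varepsilon$ is the maximum allowable secrecy outage probability. *)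

theory Defs
  imports Complex_Main
begin

definition pos_part :: "real \<Rightarrow> real" where
  "pos_part x = max x 0"

text \<open>Rate of the weak user 1; g1 = |h1|^2, rho1 = P/sigma1^2.\<close>
definition C1 :: "real \<Rightarrow> real \<Rightarrow> real \<Rightarrow> real \<Rightarrow> real" where
  "C1 rho1 g1 phi1 phi2 = log 2 (1 + phi1 * rho1 * g1 / (phi2 * rho1 * g1 + 1))"

text \<open>Secrecy rate of the strong user 2; g2 = |h2|^2, rho2 = P/sigma2^2.\<close>
definition R2s :: "real \<Rightarrow> real \<Rightarrow> real \<Rightarrow> real \<Rightarrow> real" where
  "R2s rho2 g2 phi2 RE = pos_part (log 2 (1 + phi2 * rho2 * g2) - RE)"

text \<open>High-MER asymptotic secrecy outage probability; rhoe = P/sigmae^2.\<close>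
definition Pout_inf :: "real \<Rightarrow> real \<Rightarrow> real \<Rightarrow> real \<Rightarrow> real" where
  "Pout_inf rhoe phi1 phi2 RE =
     (if 2 powr RE - 1 < phi2 / phi1
      then exp (- (2 powr RE - 1) / (rhoe * (phi2 - phi1 * (2 powr RE - 1))))
      else 0)"

definition P1_feasible ::
  "real \<Rightarrow> real \<Rightarrow> real \<Rightarrow> real \<Rightarrow> real \<Rightarrow> real \<Rightarrow> real \<Rightarrow> real \<Rightarrow> bool" where
  "P1_feasible rho1 g1 rhoe Q1 eps RE phi1 phi2 \<longleftrightarrow>
     RE \<ge> 0 \<and> 0 < phi1 \<and> phi1 \<le> 1 \<and> 0 < phi2 \<and> phi2 \<le> 1 \<and>
     C1 rho1 g1 phi1 phi2 \<ge> Q1 \<and> Pout_inf rhoe phi1 phi2 RE \<le> eps \<and> phi1 + phi2 = 1"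

end

(*
  The constraint C1 >= Q1 is an upper bound phi2 <= A on the power fraction of the strong
  user, and the outage constraint is a lower bound RE >= log2 ((1 + b) / (1 + b phi1)) on
  the redundancy rate, b = rhoe ln (1/eps); the secrecy rate decreases in RE, so at an
  optimum RE sits at this bound. There the secrecy rate is
  log2 ((1 + a phi2) (1 + b (1 - phi2)) / (1 + b)), a = rho2 |h2|^2, and the product is a
  concave parabola in phi2 exceeding 1 + b exactly for 0 < phi2 < 2 B, where B is its
  vertex 1/2 + 1/(2b) - 1/(2a). Hence a positive secrecy rate is achievable iff A > 0 and
  B > 0, and the optimal power fraction is min A B.
*)
theory Submission
  imports Defs
begin

definition min_redundancy :: "real \<Rightarrow> real \<Rightarrow> real" where
  "min_redundancy b phi1 = log 2 ((1 + b) / (1 + b * phi1))"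

definition C1_phi2_bound :: "real \<Rightarrow> real \<Rightarrow> real" where
  "C1_phi2_bound c Q = (c + 1 - 2 powr Q) / (2 powr Q * c)"

definition secrecy_vertex :: "real \<Rightarrow> real \<Rightarrow> real" where
  "secrecy_vertex a b = 1/2 + 1 / (2 * b) - 1 / (2 * a)"

lemma pos_part_pos_iff: "0 < pos_part x \<longleftrightarrow> 0 < x"
  unfolding pos_part_def by (simp add: less_max_iff_disj)

lemma pos_part_mono: "x \<le> y \<Longrightarrow> pos_part x \<le> pos_part y"
  unfolding pos_part_def by simp

lemma Pout_inf_le_iff:
  fixes r e phi1 phi2 RE :: real
  assumes "r > 0" "0 < e" "e < 1" "phi1 > 0" "RE \<ge> 0"
  defines "b \<equiv> r * ln (1 / e)"
  shows "Pout_inf r phi1 phi2 RE \<le> e \<longleftrightarrow> b * phi2 \<le> (2 powr RE - 1) * (1 + b * phi1)"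
proof -
  define x where "x = 2 powr RE - 1"
  define L where "L = ln (1 / e)"
  have "x \<ge> 0" unfolding x_def using \<open>RE \<ge> 0\<close> by (simp add: ge_one_powr_ge_zero)
  have "L > 0" unfolding L_def using \<open>0 < e\<close> \<open>e < 1\<close> by simp
  have "ln e = - L" unfolding L_def using \<open>0 < e\<close> by (simp add: ln_div)
  show ?thesis
  proof (cases "x < phi2 / phi1")
    case True
    define d where "d = phi2 - phi1 * x"
    have "d > 0" using True \<open>phi1 > 0\<close> unfolding d_def by (simp add: field_simps)
    have "Pout_inf r phi1 phi2 RE = exp (- x / (r * d))"
      unfolding Pout_inf_def x_def[symmetric] d_def using True by simp
    also have "\<dots> \<le> e \<longleftrightarrow> - x / (r * d) \<le> ln e"
      using \<open>0 < e\<close> by (metis exp_le_cancel_iff exp_ln)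
    also have "\<dots> \<longleftrightarrow> L \<le> x / (r * d)"
      using \<open>ln e = - L\<close> by linarith
    also have "\<dots> \<longleftrightarrow> L * (r * d) \<le> x"
      using \<open>r > 0\<close> \<open>d > 0\<close> by (simp add: pos_le_divide_eq)
    also have "\<dots> \<longleftrightarrow> b * phi2 \<le> x * (1 + b * phi1)"
      unfolding d_def b_def L_def by (simp add: algebra_simps)
    finally show ?thesis unfolding x_def .
  next
    case False
    then have "phi2 \<le> phi1 * x" using \<open>phi1 > 0\<close> by (simp add: field_simps)
    then have "b * phi2 \<le> b * (phi1 * x)"
      using \<open>r > 0\<close> \<open>L > 0\<close> unfolding b_def L_def by simp
    also have "\<dots> \<le> x * (1 + b * phi1)"
      using \<open>x \<ge> 0\<close> by (simp add: algebra_simps)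
    finally have "b * phi2 \<le> x * (1 + b * phi1)" .
    moreover have "Pout_inf r phi1 phi2 RE = 0"
      unfolding Pout_inf_def x_def[symmetric] using False by simp
    ultimately show ?thesis using \<open>0 < e\<close> unfolding x_def by simp
  qed
qed

lemma Pout_inf_le_iff_min_redundancy:
  fixes r e phi1 phi2 RE :: real
  assumes "r > 0" "0 < e" "e < 1" "phi1 > 0" "phi1 + phi2 = 1" "RE \<ge> 0"
  shows "Pout_inf r phi1 phi2 RE \<le> e \<longleftrightarrow> min_redundancy (r * ln (1 / e)) phi1 \<le> RE"
proof -
  define b where "b = r * ln (1 / e)"
  have "b > 0" unfolding b_def using assms(1-3) by simp
  then have "1 + b * phi1 > 0" using \<open>phi1 > 0\<close> by (simp add: add_pos_pos)
  have "Pout_inf r phi1 phi2 RE \<le> e \<longleftrightarrow> b * phi2 \<le> (2 powr RE - 1) * (1 + b * phi1)"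
    unfolding b_def using Pout_inf_le_iff assms by blast
  also have "\<dots> \<longleftrightarrow> 1 + b \<le> 2 powr RE * (1 + b * phi1)"
    using \<open>phi1 + phi2 = 1\<close> by (auto simp: algebra_simps simp flip: distrib_left)
  also have "\<dots> \<longleftrightarrow> (1 + b) / (1 + b * phi1) \<le> 2 powr RE"
    using \<open>1 + b * phi1 > 0\<close> by (simp add: pos_divide_le_eq)
  also have "\<dots> \<longleftrightarrow> min_redundancy b phi1 \<le> RE"
    unfolding min_redundancy_def using \<open>b > 0\<close> \<open>1 + b * phi1 > 0\<close> by (simp add: log_le_iff)
  finally show ?thesis unfolding b_def .
qed

lemma min_redundancy_nonneg:
  assumes "b \<ge> 0" "0 \<le> phi1" "phi1 \<le> 1"
  shows "min_redundancy b phi1 \<ge> 0"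
proof -
  have "b * phi1 \<le> b" using assms by (simp add: mult_left_le)
  moreover have "b * phi1 \<ge> 0" using assms by simp
  ultimately show ?thesis unfolding min_redundancy_def by simp
qed

lemma min_redundancy_eq:
  assumes "s > 0" "x \<ge> 0" "phi1 \<ge> 0" "phi1 + phi2 = 1"
  shows "min_redundancy (x / s) phi1 = log 2 (1 + phi2 * x / (s + phi1 * x))"
proof -
  have "s + phi1 * x > 0" using assms by (simp add: add_pos_nonneg)
  have "1 + x / s = (s + x) / s" "1 + x / s * phi1 = (s + phi1 * x) / s"
    using \<open>s > 0\<close> by (simp_all add: field_simps)
  then have "(1 + x / s) / (1 + x / s * phi1) = (s + x) / (s + phi1 * x)"
    using \<open>s > 0\<close> by simp
  also have "\<dots> = 1 + phi2 * x / (s + phi1 * x)"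
    using \<open>s + phi1 * x > 0\<close> \<open>phi1 + phi2 = 1\<close> by (simp add: field_simps flip: distrib_right)
  finally show ?thesis unfolding min_redundancy_def by simp
qed

lemma C1_ge_iff:
  fixes rho g phi1 phi2 Q :: real
  assumes "rho > 0" "g > 0" "phi2 \<ge> 0" "phi1 + phi2 = 1"
  shows "C1 rho g phi1 phi2 \<ge> Q \<longleftrightarrow> phi2 \<le> C1_phi2_bound (rho * g) Q"
proof -
  define c where "c = rho * g"
  have "c > 0" unfolding c_def using assms by simp
  then have "phi2 * c + 1 > 0" using \<open>phi2 \<ge> 0\<close> by (simp add: add_nonneg_pos)
  have "1 + phi1 * c / (phi2 * c + 1) = (c + 1) / (phi2 * c + 1)"
    using \<open>phi2 * c + 1 > 0\<close> \<open>phi1 + phi2 = 1\<close>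
    by (simp add: field_simps flip: distrib_left)
  then have "C1 rho g phi1 phi2 = log 2 ((c + 1) / (phi2 * c + 1))"
    unfolding C1_def c_def by (simp add: mult.assoc)
  also have "Q \<le> \<dots> \<longleftrightarrow> 2 powr Q * (phi2 * c + 1) \<le> c + 1"
    using \<open>c > 0\<close> \<open>phi2 * c + 1 > 0\<close> by (simp add: le_log_iff pos_le_divide_eq)
  also have "\<dots> \<longleftrightarrow> phi2 * (2 powr Q * c) \<le> c + 1 - 2 powr Q"
    by (simp add: algebra_simps)
  also have "\<dots> \<longleftrightarrow> phi2 \<le> C1_phi2_bound c Q"
    unfolding C1_phi2_bound_def using \<open>c > 0\<close> by (simp add: pos_le_divide_eq)
  finally show ?thesis unfolding c_def .
qed

lemma C1_phi2_bound_less_one: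
  assumes "c > 0" "Q > 0"
  shows "C1_phi2_bound c Q < 1"
proof -
  have "1 < 2 powr Q" using \<open>Q > 0\<close> by simp
  moreover have "c < 2 powr Q * c" using \<open>1 < 2 powr Q\<close> \<open>c > 0\<close> by simp
  ultimately have "c + 1 - 2 powr Q < 2 powr Q * c" by linarith
  then show ?thesis
    unfolding C1_phi2_bound_def using \<open>c > 0\<close> by (simp add: pos_divide_less_eq)
qed

lemma C1_phi2_bound_pos_iff:
  assumes "c > 0"
  shows "0 < C1_phi2_bound c Q \<longleftrightarrow> 2 powr Q - 1 < c"
  unfolding C1_phi2_bound_def using assms by (auto simp: pos_less_divide_eq)

lemma C1_phi2_bound_pos_iff_power:
  assumes "P > 0" "s > 0" "g > 0"
  shows "0 < C1_phi2_bound (P / s * g) Q \<longleftrightarrow> (2 powr Q - 1) / g * s < P"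
proof -
  have "0 < C1_phi2_bound (P / s * g) Q \<longleftrightarrow> 2 powr Q - 1 < P / s * g"
    using assms by (simp add: C1_phi2_bound_pos_iff)
  also have "\<dots> \<longleftrightarrow> (2 powr Q - 1) / g * s < P"
    using assms by (simp add: field_simps)
  finally show ?thesis .
qed

lemma P1_feasible_iff:
  assumes "rho1 > 0" "g1 > 0" "rhoe > 0" "Q1 > 0" "0 < eps" "eps < 1"
  shows "P1_feasible rho1 g1 rhoe Q1 eps RE phi1 phi2 \<longleftrightarrow>
    0 < phi2 \<and> phi2 \<le> C1_phi2_bound (rho1 * g1) Q1 \<and> phi1 = 1 - phi2 \<and>
    min_redundancy (rhoe * ln (1 / eps)) phi1 \<le> RE"
proof
  assume "P1_feasible rho1 g1 rhoe Q1 eps RE phi1 phi2"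
  then show "0 < phi2 \<and> phi2 \<le> C1_phi2_bound (rho1 * g1) Q1 \<and> phi1 = 1 - phi2 \<and>
      min_redundancy (rhoe * ln (1 / eps)) phi1 \<le> RE"
    unfolding P1_feasible_def using C1_ge_iff Pout_inf_le_iff_min_redundancy assms by auto
next
  assume reduced: "0 < phi2 \<and> phi2 \<le> C1_phi2_bound (rho1 * g1) Q1 \<and> phi1 = 1 - phi2 \<and>
    min_redundancy (rhoe * ln (1 / eps)) phi1 \<le> RE"
  moreover have "C1_phi2_bound (rho1 * g1) Q1 < 1"
    using assms by (simp add: C1_phi2_bound_less_one)
  ultimately have "0 < phi1" "phi1 \<le> 1" by auto
  moreover have "RE \<ge> 0"
    using reduced min_redundancy_nonneg[of "rhoe * ln (1 / eps)" phi1] \<open>0 < phi1\<close> \<open>phi1 \<le> 1\<close> assms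
    by force
  ultimately show "P1_feasible rho1 g1 rhoe Q1 eps RE phi1 phi2"
    unfolding P1_feasible_def using reduced C1_ge_iff Pout_inf_le_iff_min_redundancy assms by auto
qed

lemma secrecy_product_eq:
  assumes "a \<noteq> 0" "b \<noteq> 0"
  shows "(1 + a * p) * (1 + b * (1 - p)) = 1 + b + a * b * p * (2 * secrecy_vertex a b - p)"
  unfolding secrecy_vertex_def using assms by (simp add: field_simps)

lemma rate_at_min_redundancy_eq:
  fixes a b p :: real
  assumes "a \<ge> 0" "b \<ge> 0" "0 \<le> p" "p \<le> 1"
  shows "log 2 (1 + a * p) - min_redundancy b (1 - p) =
    log 2 ((1 + a * p) * (1 + b * (1 - p))) - log 2 (1 + b)"
proof -
  have "1 + a * p > 0" "1 + b * (1 - p) > 0" "1 + b > 0"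
    using assms by (simp_all add: add_pos_nonneg)
  then show ?thesis
    unfolding min_redundancy_def by (simp add: log_mult_pos log_divide_pos)
qed

lemma rate_at_min_redundancy_pos_iff:
  fixes a b p :: real
  assumes "a > 0" "b > 0" "0 < p" "p \<le> 1"
  shows "0 < log 2 (1 + a * p) - min_redundancy b (1 - p) \<longleftrightarrow> p < 2 * secrecy_vertex a b"
proof -
  have "1 + a * p > 0" "1 + b * (1 - p) > 0" "1 + b > 0"
    using assms by (simp_all add: add_pos_nonneg)
  then have "0 < log 2 (1 + a * p) - min_redundancy b (1 - p) \<longleftrightarrow>
      1 + b < (1 + a * p) * (1 + b * (1 - p))"
    using assms by (simp add: rate_at_min_redundancy_eq)
  also have "\<dots> \<longleftrightarrow> 0 < a * b * p * (2 * secrecy_vertex a b - p)"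
    using assms by (simp add: secrecy_product_eq)
  also have "\<dots> \<longleftrightarrow> p < 2 * secrecy_vertex a b"
    using assms by (simp add: zero_less_mult_iff mult_less_0_iff)
  finally show ?thesis .
qed

lemma rate_at_min_redundancy_le_at_min_vertex:
  fixes a b p A :: real
  assumes "a > 0" "b > 0" "0 \<le> p" "p \<le> A" "A \<le> 1" "0 \<le> min A (secrecy_vertex a b)"
  defines "m \<equiv> min A (secrecy_vertex a b)"
  shows "log 2 (1 + a * p) - min_redundancy b (1 - p) \<le>
    log 2 (1 + a * m) - min_redundancy b (1 - m)"
proof -
  define v where "v = secrecy_vertex a b"
  have product: "(1 + a * x) * (1 + b * (1 - x)) = 1 + b + a * b * x * (2 * v - x)" for x
    using assms by (simp add: secrecy_product_eq v_def)
  have "(1 + a * m) * (1 + b * (1 - m)) - (1 + a * p) * (1 + b * (1 - p)) =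
      a * b * ((m - p) * (2 * v - m - p))"
    unfolding product by algebra
  moreover have "(m - p) * (2 * v - m - p) \<ge> 0"
  proof (cases "A \<le> v")
    case True
    then show ?thesis using \<open>p \<le> A\<close> by (simp add: m_def v_def)
  next
    case False
    then have "(m - p) * (2 * v - m - p) = (v - p)\<^sup>2"
      by (simp add: m_def v_def power2_eq_square algebra_simps)
    then show ?thesis by simp
  qed
  then have "a * b * ((m - p) * (2 * v - m - p)) \<ge> 0"
    using assms by simp
  ultimately have "(1 + a * p) * (1 + b * (1 - p)) \<le> (1 + a * m) * (1 + b * (1 - m))"
    by linarith
  moreover have "0 < (1 + a * p) * (1 + b * (1 - p))"
    using assms by (simp add: add_pos_nonneg)
  ultimately show ?thesis
    using assms by (simp add: rate_at_min_redundancy_eq m_def)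
qed

lemma secrecy_vertex_pos_iff:
  assumes "a > 0" "b > 0"
  shows "0 < secrecy_vertex a b \<longleftrightarrow> 1 / a - 1 / b < 1"
  unfolding secrecy_vertex_def by (simp add: field_simps)

lemma secrecy_vertex_pos_iff_power:
  assumes "P > 0" "s > 0" "g > 0" "se > 0" "L > 0"
  shows "0 < secrecy_vertex (P / s * g) (P / se * L) \<longleftrightarrow> s / g - se / L < P"
proof -
  have "0 < secrecy_vertex (P / s * g) (P / se * L) \<longleftrightarrow> 1 / (P / s * g) - 1 / (P / se * L) < 1"
    using assms by (simp add: secrecy_vertex_pos_iff)
  also have "\<dots> \<longleftrightarrow> s / g - se / L < P"
    using assms by (simp add: field_simps)
  finally show ?thesis .
qed

lemma reduced_problem_positive_iff:
  fixes a b A :: real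
  assumes "a > 0" "b > 0" "A < 1"
  shows "(\<exists>RE p. 0 < p \<and> p \<le> A \<and> min_redundancy b (1 - p) \<le> RE \<and> 0 < log 2 (1 + a * p) - RE)
    \<longleftrightarrow> 0 < A \<and> 0 < secrecy_vertex a b"
proof
  assume "\<exists>RE p. 0 < p \<and> p \<le> A \<and> min_redundancy b (1 - p) \<le> RE \<and> 0 < log 2 (1 + a * p) - RE"
  then obtain RE p where "0 < p" "p \<le> A" "min_redundancy b (1 - p) \<le> RE" "0 < log 2 (1 + a * p) - RE"
    by blast
  then have "0 < log 2 (1 + a * p) - min_redundancy b (1 - p)" by linarith
  then have "p < 2 * secrecy_vertex a b"
    using rate_at_min_redundancy_pos_iff assms \<open>0 < p\<close> \<open>p \<le> A\<close> by simp
  then show "0 < A \<and> 0 < secrecy_vertex a b" using \<open>0 < p\<close> \<open>p \<le> A\<close> by simp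
next
  assume "0 < A \<and> 0 < secrecy_vertex a b"
  then have "0 < min A (secrecy_vertex a b)" "min A (secrecy_vertex a b) < 2 * secrecy_vertex a b"
    by auto
  then show "\<exists>RE p. 0 < p \<and> p \<le> A \<and> min_redundancy b (1 - p) \<le> RE \<and> 0 < log 2 (1 + a * p) - RE"
    using rate_at_min_redundancy_pos_iff[of a b "min A (secrecy_vertex a b)"] assms
    by (intro exI[of _ "min_redundancy b (1 - min A (secrecy_vertex a b))"]
        exI[of _ "min A (secrecy_vertex a b)"]) auto
qed

lemma reduced_problem_optimum:
  fixes a b A p RE :: real
  assumes "a > 0" "b > 0" "A < 1" "0 < A" "0 < secrecy_vertex a b"
    and "0 < p" "p \<le> A" "min_redundancy b (1 - p) \<le> RE"
  defines "m \<equiv> min A (secrecy_vertex a b)"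
  shows "pos_part (log 2 (1 + a * p) - RE) \<le> pos_part (log 2 (1 + a * m) - min_redundancy b (1 - m))"
proof (rule pos_part_mono)
  have "log 2 (1 + a * p) - RE \<le> log 2 (1 + a * p) - min_redundancy b (1 - p)"
    using \<open>min_redundancy b (1 - p) \<le> RE\<close> by simp
  also have "\<dots> \<le> log 2 (1 + a * m) - min_redundancy b (1 - m)"
    unfolding m_def using assms by (intro rate_at_min_redundancy_le_at_min_vertex) auto
  finally show "log 2 (1 + a * p) - RE \<le> log 2 (1 + a * m) - min_redundancy b (1 - m)" .
qed

lemma P1_optimal_solution:
  fixes rho1 g1 rho2 g2 rhoe Q1 eps :: real
  assumes "rho1 > 0" "g1 > 0" "rho2 > 0" "g2 > 0" "rhoe > 0" "Q1 > 0" "0 < eps" "eps < 1"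
  defines "A \<equiv> C1_phi2_bound (rho1 * g1) Q1"
    and "B \<equiv> secrecy_vertex (rho2 * g2) (rhoe * ln (1 / eps))"
  defines "RE_opt \<equiv> min_redundancy (rhoe * ln (1 / eps)) (1 - min A B)"
  shows P1_solvable_iff:
      "(\<exists>RE phi1 phi2. P1_feasible rho1 g1 rhoe Q1 eps RE phi1 phi2 \<and> R2s rho2 g2 phi2 RE > 0)
        \<longleftrightarrow> 0 < A \<and> 0 < B"
    and P1_optimum_feasible:
      "0 < A \<Longrightarrow> 0 < B \<Longrightarrow> P1_feasible rho1 g1 rhoe Q1 eps RE_opt (1 - min A B) (min A B)"
    and P1_optimum_maximal:
      "0 < A \<Longrightarrow> 0 < B \<Longrightarrow> P1_feasible rho1 g1 rhoe Q1 eps RE phi1 phi2 \<Longrightarrow>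
        R2s rho2 g2 phi2 RE \<le> R2s rho2 g2 (min A B) RE_opt"
proof -
  define a b where "a = rho2 * g2" and "b = rhoe * ln (1 / eps)"
  have "a > 0" "b > 0" unfolding a_def b_def using assms(3-5,7,8) by simp_all
  have "A < 1" unfolding A_def using assms(1,2,6) by (simp add: C1_phi2_bound_less_one)
  have feasible: "P1_feasible rho1 g1 rhoe Q1 eps RE phi1 phi2 \<longleftrightarrow>
      0 < phi2 \<and> phi2 \<le> A \<and> phi1 = 1 - phi2 \<and> min_redundancy b (1 - phi2) \<le> RE" for RE phi1 phi2
    using P1_feasible_iff[OF assms(1,2,5-8)] unfolding A_def b_def by auto
  have rate: "R2s rho2 g2 phi2 RE = pos_part (log 2 (1 + a * phi2) - RE)" for phi2 RE
    unfolding R2s_def a_def by (simp add: ac_simps)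
  have "(\<exists>RE phi1 phi2. P1_feasible rho1 g1 rhoe Q1 eps RE phi1 phi2 \<and> R2s rho2 g2 phi2 RE > 0)
      \<longleftrightarrow> (\<exists>RE p. 0 < p \<and> p \<le> A \<and> min_redundancy b (1 - p) \<le> RE \<and> 0 < log 2 (1 + a * p) - RE)"
    unfolding feasible rate pos_part_pos_iff by auto
  also have "\<dots> \<longleftrightarrow> 0 < A \<and> 0 < B"
    unfolding B_def a_def[symmetric] b_def[symmetric]
    using \<open>a > 0\<close> \<open>b > 0\<close> \<open>A < 1\<close> by (rule reduced_problem_positive_iff)
  finally show "(\<exists>RE phi1 phi2. P1_feasible rho1 g1 rhoe Q1 eps RE phi1 phi2 \<and> R2s rho2 g2 phi2 RE > 0)
      \<longleftrightarrow> 0 < A \<and> 0 < B" .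
  show "P1_feasible rho1 g1 rhoe Q1 eps RE_opt (1 - min A B) (min A B)" if "0 < A" "0 < B"
    using that feasible unfolding RE_opt_def b_def by simp
  show "R2s rho2 g2 phi2 RE \<le> R2s rho2 g2 (min A B) RE_opt"
    if "0 < A" "0 < B" "P1_feasible rho1 g1 rhoe Q1 eps RE phi1 phi2"
    using reduced_problem_optimum[OF \<open>a > 0\<close> \<open>b > 0\<close> \<open>A < 1\<close>] that feasible
    unfolding rate RE_opt_def B_def a_def[symmetric] b_def[symmetric] by auto
qed

theorem theorem2:
  fixes P s1 s2 se Q1 eps :: real and h1 h2 :: complex
  assumes "P > 0" "s1 > 0" "s2 > 0" "se > 0"
    and "0 < (cmod h1)\<^sup>2" "(cmod h1)\<^sup>2 \<le> (cmod h2)\<^sup>2"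
    and "Q1 > 0" "0 < eps" "eps < 1"
  defines "g1 \<equiv> (cmod h1)\<^sup>2" and "g2 \<equiv> (cmod h2)\<^sup>2"
    and "rho1 \<equiv> P / s1" and "rho2 \<equiv> P / s2" and "rhoe \<equiv> P / se"
    and "L \<equiv> ln (1 / eps)"
    and "phi2s \<equiv> min (1 / 2 powr Q1 + s1 / (P * (cmod h1)\<^sup>2 * 2 powr Q1) - s1 / (P * (cmod h1)\<^sup>2))
                       (1/2 + se / (2 * P * ln (1 / eps)) - s2 / (2 * P * (cmod h2)\<^sup>2))"
    and "phi1s \<equiv> 1 - min (1 / 2 powr Q1 + s1 / (P * (cmod h1)\<^sup>2 * 2 powr Q1) - s1 / (P * (cmod h1)\<^sup>2))
                       (1/2 + se / (2 * P * ln (1 / eps)) - s2 / (2 * P * (cmod h2)\<^sup>2))"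
  shows "((\<exists>RE phi1 phi2. P1_feasible rho1 g1 rhoe Q1 eps RE phi1 phi2
                          \<and> R2s rho2 g2 phi2 RE > 0)
            \<longleftrightarrow> P > max ((2 powr Q1 - 1) / g1 * s1) (s2 / g2 - se / L))
       \<and> (P > max ((2 powr Q1 - 1) / g1 * s1) (s2 / g2 - se / L) \<longrightarrow>
            P1_feasible rho1 g1 rhoe Q1 eps
              (log 2 (1 + phi2s * P * L / (se + phi1s * P * L))) phi1s phi2s \<and>
            (\<forall>RE phi1 phi2. P1_feasible rho1 g1 rhoe Q1 eps RE phi1 phi2 \<longrightarrow>
                R2s rho2 g2 phi2 RE \<le> R2s rho2 g2 phi2s (log 2 (1 + phi2s * P * L / (se + phi1s * P * L)))))"
proof -
  have "g1 > 0" "g2 > 0" "L > 0"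
    using assms(5,6,8,9) unfolding g1_def g2_def L_def by auto
  have "rho1 > 0" "rho2 > 0" "rhoe > 0"
    unfolding rho1_def rho2_def rhoe_def using assms(1-4) by simp_all
  define A B where "A = C1_phi2_bound (rho1 * g1) Q1" and "B = secrecy_vertex (rho2 * g2) (rhoe * L)"
  have "A < 1"
    unfolding A_def using \<open>rho1 > 0\<close> \<open>g1 > 0\<close> assms(7) by (simp add: C1_phi2_bound_less_one)
  have "phi2s = min A B"
  proof -
    have "A = 1 / 2 powr Q1 + s1 / (P * g1 * 2 powr Q1) - s1 / (P * g1)"
      unfolding A_def C1_phi2_bound_def rho1_def using assms(1,2) \<open>g1 > 0\<close> by (simp add: field_simps)
    moreover have "B = 1/2 + se / (2 * P * L) - s2 / (2 * P * g2)"
      unfolding B_def secrecy_vertex_def rho2_def rhoe_def by simp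
    ultimately show ?thesis unfolding phi2s_def g1_def g2_def L_def by simp
  qed
  have "phi1s = 1 - phi2s" unfolding phi1s_def phi2s_def ..
  have RE_opt: "log 2 (1 + phi2s * P * L / (se + phi1s * P * L)) =
      min_redundancy (rhoe * L) (1 - min A B)"
    using min_redundancy_eq[of se "P * L" phi1s phi2s] assms(1,4) \<open>L > 0\<close> \<open>A < 1\<close>
      \<open>phi2s = min A B\<close> \<open>phi1s = 1 - phi2s\<close>
    unfolding rhoe_def by (simp add: mult.assoc)
  have "0 < A \<longleftrightarrow> (2 powr Q1 - 1) / g1 * s1 < P"
    unfolding A_def rho1_def using assms(1,2) \<open>g1 > 0\<close> by (rule C1_phi2_bound_pos_iff_power)
  moreover have "0 < B \<longleftrightarrow> s2 / g2 - se / L < P"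
    unfolding B_def rho2_def rhoe_def using assms(1,3) \<open>g2 > 0\<close> assms(4) \<open>L > 0\<close>
    by (rule secrecy_vertex_pos_iff_power)
  ultimately have condition: "P > max ((2 powr Q1 - 1) / g1 * s1) (s2 / g2 - se / L) \<longleftrightarrow> 0 < A \<and> 0 < B"
    by simp
  show ?thesis
    unfolding condition RE_opt
    unfolding \<open>phi1s = 1 - phi2s\<close> \<open>phi2s = min A B\<close>
    using P1_optimal_solution[OF \<open>rho1 > 0\<close> \<open>g1 > 0\<close> \<open>rho2 > 0\<close> \<open>g2 > 0\<close> \<open>rhoe > 0\<close> assms(7-9)]
    unfolding A_def B_def L_def by blast
qed

end
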